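(* Let $(f_0,\dots,f_4)$ be a rational solution of $A_4(\alpha_0,\dots,\alpha_4)$ and fix $i\in\{0,\dots,4\}$. (1) If $c\in\mathbb{C}\setminus\{0\}$ is a pole of $f_i$, then $-c$ is also a pole of $f_i$ and $\mathrm{Res}_{t=c}f_i=\mathrm{Res}_{t=-c}f_i$. (2) If $\mathrm{Res}_{t=\infty}f_i$ is an even integer, then $t=0$ is not a pole of $f_i$, and therefore $f_i=a_{i,1}t+\sum_{j=1}^{n_i}\left(\frac{\varepsilon_{i,j}}{t-c_{i,j}}+\frac{\varepsilon_{i,j}}{t+c_{i,j}}\right)$ with $a_{i,1}\in\{0,\pm1,\frac13,\frac15\}$, $\varepsilon_{i,j}\in\{\pm1,\pm3\}$ and $c_{i,j}\neq0$. (3) If $\mathrm{Res}_{t=\infty}f_i$ is an odd integer, then $t=0$ is a pole of $f_i$, and therefore $f_i=a_{i,1}t+\frac{\varepsilon_{i,0}}{t}+\sum_{j=1}^{n_i}\left(\frac{\varepsilon_{i,j}}{t-c_{i,j}}+\frac{\varepsilon_{i,j}}{t+c_{i,j}}\right)$ with $\varepsilon_{i,0},\varepsilon_{i,j}\in\{\pm1,\pm3\}$ and $c_{i,j}\neq0$.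
   Context: The $A_4^{(1)}$ Painlevé equation $A_4(\alpha_0,\dots,\alpha_4)$ with complex parameters $\alpha_j$ is the system for five functions $f_0,\dots,f_4$ of $t$ (indices in $\mathbb{Z}/5\mathbb{Z}$, ${}'=d/dt$): $f_j'=f_j(f_{j+1}-f_{j+2}+f_{j+3}-f_{j+4})+\alpha_j$ ($j=0,\dots,4$), $f_0+\dots+f_4=t$; hence $\sum_j\alpha_j=1$. A rational solution is a tuple of rational functions of $t$ satisfying it. $\mathrm{Res}_{t=\infty}f$ denotes the residue at infinity, i.e. minus the coefficient of $t^{-1}$ in the Laurent expansion of $f$ at $t=\infty$. *)

theory Defs
  imports "HOL-Complex_Analysis.Complex_Analysis" "HOL-Computational_Algebra.Polynomial"
begin

definition rat_fun :: "(complex \<Rightarrow> complex) \<Rightarrow> bool" where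
  "rat_fun f \<longleftrightarrow> (\<exists>p q. q \<noteq> 0 \<and> f = (\<lambda>t. poly p t / poly q t))"

text \<open>Rational solution of A4(alpha_0..alpha_4); indices j < 5 read mod 5.
  The ODEs and the constraint hold identically, i.e. at all but finitely many t.\<close>
definition A4_rational_solution ::
  "(nat \<Rightarrow> complex) \<Rightarrow> (nat \<Rightarrow> complex \<Rightarrow> complex) \<Rightarrow> bool" where
  "A4_rational_solution \<alpha> f \<longleftrightarrow>
     (\<forall>j<5. rat_fun (f j)) \<and>
     (\<forall>\<^sub>F t in cofinite.
        (\<forall>j<5. (f j has_field_derivative
                 (f j t * (f ((j+1) mod 5) t - f ((j+2) mod 5) t
                           + f ((j+3) mod 5) t - f ((j+4) mod 5) t) + \<alpha> j)) (at t))
        \<and> (\<Sum>j<5. f j t) = t)"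

text \<open>Residue at infinity: minus the coefficient of t^(-1) of the Laurent expansion at infinity,
  i.e. Res_{t=inf} f = - Res_{w=0} f(1/w)/w^2.\<close>
definition res_inf :: "(complex \<Rightarrow> complex) \<Rightarrow> complex" where
  "res_inf f = - residue (\<lambda>w. f (1 / w) / w ^ 2) 0"

end

(*
  Expanding a rational solution in Laurent series, at a finite point or at infinity, turns the
  system into recursions for the coefficients.  The leading coefficients x_j solve a stationary
  system x_j (x_{j+1} - x_{j+2} + x_{j+3} - x_{j+4}) = c x_j, with c = 0 or -1 and prescribed sum
  of the x_j, which has only a few solutions: every pole is simple with residue 1, -1, 3 or -3,
  and the pole at infinity is simple with leading coefficient 0, 1, -1, 1/3 or 1/5.  As the
  linearized stationary system is nondegenerate, the formal solution at infinity is determined by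
  these leading coefficients.  The symmetry t \<mapsto> -t, f_j(t) \<mapsto> -f_j(-t) preserves the system
  and the leading coefficients at infinity, so every rational solution is odd and its residues at
  c and -c agree.  Liouville's theorem gives the partial fraction decomposition, and the residue
  at infinity is minus the sum of the finite residues; these are odd integers which cancel in
  pairs modulo 2, except the residue at 0.
*)
theory Submission
  imports Defs
begin

unbundle fps_syntax

section \<open>The stationary equations\<close>

definition alt_sum :: "(nat \<Rightarrow> 'a::ab_group_add) \<Rightarrow> nat \<Rightarrow> 'a" where
  "alt_sum x j = x ((j+1) mod 5) - x ((j+2) mod 5) + x ((j+3) mod 5) - x ((j+4) mod 5)"

lemma alt_sum_eval:
  "alt_sum x 0 = x 1 - x 2 + x 3 - x 4" "alt_sum x 1 = x 2 - x 3 + x 4 - x 0"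
  "alt_sum x 2 = x 3 - x 4 + x 0 - x 1" "alt_sum x 3 = x 4 - x 0 + x 1 - x 2"
  "alt_sum x 4 = x 0 - x 1 + x 2 - x 3"
  by (simp_all add: alt_sum_def numeral_2_eq_2)

lemma alt_sum_rotate: "alt_sum (\<lambda>k. x ((k + m) mod 5)) j = alt_sum x ((j + m) mod 5)"
proof -
  have "((j + k) mod 5 + m) mod 5 = ((j + m) mod 5 + k) mod 5" for k :: nat
    by (simp add: mod_add_left_eq mod_add_right_eq ac_simps)
  then show ?thesis
    by (simp only: alt_sum_def)
qed

lemma alt_sum_uminus: "alt_sum (\<lambda>k. - x k) j = - alt_sum x j"
  by (simp add: alt_sum_def)

lemma alt_sum_diff: "alt_sum (\<lambda>k. x k - y k) j = alt_sum x j - alt_sum y j"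
  by (simp add: alt_sum_def algebra_simps)

lemma fls_nth_alt_sum: "alt_sum F j $$ n = alt_sum (\<lambda>k. F k $$ n) j"
  by (simp add: alt_sum_def)

lemma all_less_5: "(\<forall>j<5. P j) \<longleftrightarrow> P 0 \<and> P 1 \<and> P 2 \<and> P 3 \<and> P (4::nat)"
  by (auto simp: eval_nat_numeral less_Suc_eq)

lemma sum_lessThan_5: "(\<Sum>j<5. x j) = x 0 + x 1 + x 2 + x 3 + x (4::nat)"
  by (simp add: eval_nat_numeral)

lemma sum_lessThan_5_rotate:
  assumes "m < (5::nat)"
  shows "(\<Sum>k<5. x ((k + m) mod 5)) = (\<Sum>k<5. x k)"
proof -
  consider "m = 0" | "m = 1" | "m = 2" | "m = 3" | "m = 4"
    using assms by linarith
  then show ?thesis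
    by cases (simp_all add: sum_lessThan_5 ac_simps numeral_2_eq_2)
qed

lemma alt_sum_system_trivial:
  fixes x :: "nat \<Rightarrow> complex"
  assumes "\<forall>j<5. x j * alt_sum x j = 0" and "(\<Sum>j<5. x j) = 0"
  shows "\<forall>j<5. x j = 0"
  using assms unfolding all_less_5 sum_lessThan_5 alt_sum_eval by algebra

lemma alt_sum_system_residues:
  fixes x :: "nat \<Rightarrow> complex"
  assumes "\<forall>j<5. x j * (1 + alt_sum x j) = 0" and "(\<Sum>j<5. x j) = 0"
  shows "\<forall>j<5. x j \<in> {0, 1, -1, 3, -3}"
  using assms unfolding all_less_5 sum_lessThan_5 alt_sum_eval insert_iff empty_iff by algebra

lemma alt_sum_system_infinity:
  fixes x :: "nat \<Rightarrow> complex"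
  assumes "\<forall>j<5. x j * alt_sum x j = 0" and "(\<Sum>j<5. x j) = 1"
  shows "\<forall>j<5. x j \<in> {0, 1, -1, 1/3, 1/5}"
  using assms unfolding all_less_5 sum_lessThan_5 alt_sum_eval insert_iff empty_iff by algebra

lemma linearized_system_index_0:
  fixes x0 x1 x2 x3 x4 y0 y1 y2 y3 y4 :: complex
  assumes "x0 * (x1 - x2 + x3 - x4) = 0" "x1 * (x2 - x3 + x4 - x0) = 0"
    "x2 * (x3 - x4 + x0 - x1) = 0" "x3 * (x4 - x0 + x1 - x2) = 0" "x4 * (x0 - x1 + x2 - x3) = 0"
    "x0 + x1 + x2 + x3 + x4 = 1"
    "y0 * (x1 - x2 + x3 - x4) + x0 * (y1 - y2 + y3 - y4) = 0"
    "y1 * (x2 - x3 + x4 - x0) + x1 * (y2 - y3 + y4 - y0) = 0"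
    "y2 * (x3 - x4 + x0 - x1) + x2 * (y3 - y4 + y0 - y1) = 0"
    "y3 * (x4 - x0 + x1 - x2) + x3 * (y4 - y0 + y1 - y2) = 0"
    "y4 * (x0 - x1 + x2 - x3) + x4 * (y0 - y1 + y2 - y3) = 0"
    "y0 + y1 + y2 + y3 + y4 = 0"
  shows "y0 = 0"
  using assms by algebra

lemma alt_sum_system_linearized_index_0:
  fixes x y :: "nat \<Rightarrow> complex"
  assumes "\<forall>j<5. x j * alt_sum x j = 0" "(\<Sum>j<5. x j) = 1"
    and "\<forall>j<5. y j * alt_sum x j + x j * alt_sum y j = 0" "(\<Sum>j<5. y j) = 0"
  shows "y 0 = 0"
  using assms unfolding all_less_5 sum_lessThan_5 alt_sum_eval
  by (blast intro: linearized_system_index_0)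

lemma alt_sum_system_linearized:
  fixes x y :: "nat \<Rightarrow> complex"
  assumes x: "\<forall>j<5. x j * alt_sum x j = 0" "(\<Sum>j<5. x j) = 1"
    and y: "\<forall>j<5. y j * alt_sum x j + x j * alt_sum y j = 0" "(\<Sum>j<5. y j) = 0"
    and m: "m < 5"
  shows "y m = 0"
proof -
  let ?rot = "\<lambda>z k. z ((k + m) mod 5)"
  have "?rot y 0 = 0"
  proof (rule alt_sum_system_linearized_index_0)
    show "\<forall>j<5. ?rot x j * alt_sum (?rot x) j = 0"
      using x(1) by (simp add: alt_sum_rotate)
    show "\<forall>j<5. ?rot y j * alt_sum (?rot x) j + ?rot x j * alt_sum (?rot y) j = 0"
      using y(1) by (simp add: alt_sum_rotate)
    show "(\<Sum>j<5. ?rot x j) = 1" "(\<Sum>j<5. ?rot y j) = 0"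
      using x(2) y(2) by (simp_all only: sum_lessThan_5_rotate[OF m])
  qed
  then show "y m = 0"
    using m by simp
qed

section \<open>Formal solutions\<close>

lemma fls_times_nth_lower_bounds:
  fixes F G :: "'a::{comm_monoid_add,mult_zero} fls"
  assumes F: "\<And>n. n < p \<Longrightarrow> F $$ n = 0" and G: "\<And>n. n < q \<Longrightarrow> G $$ n = 0"
  shows "(F * G) $$ (p + q) = F $$ p * G $$ q"
proof (cases "F = 0 \<or> G = 0")
  case False
  then have "p \<le> fls_subdegree F" "q \<le> fls_subdegree G"
    using F G by (auto intro: fls_subdegree_geI)
  then consider "fls_subdegree F = p" "fls_subdegree G = q"
    | "p + q < fls_subdegree F + fls_subdegree G" "F $$ p = 0 \<or> G $$ q = 0"
    by fastforce
  then show ?thesis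
  proof cases
    case 1
    then show ?thesis
      using fls_times_base[of F G] by simp
  next
    case 2
    then show ?thesis
      by (auto simp: fls_times_nth_eq0)
  qed
qed auto

lemma fls_family_least_nonzero_index:
  fixes F :: "nat \<Rightarrow> 'a::zero fls"
  assumes "j0 < 5" "F j0 $$ n0 \<noteq> 0"
  obtains s where "s \<le> n0" "\<forall>j<5. \<forall>n<s. F j $$ n = 0" "\<exists>j<5. F j $$ s \<noteq> 0"
proof -
  let ?D = "(\<lambda>j. fls_subdegree (F j)) ` {j. j < 5 \<and> F j \<noteq> 0}"
  have fin: "finite ?D" and j0: "fls_subdegree (F j0) \<in> ?D"
    using assms by auto
  define s where "s = Min ?D"
  have "s \<le> n0"
    using Min_le[OF fin j0] fls_subdegree_leI[OF assms(2)] unfolding s_def by linarith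
  moreover have "\<forall>j<5. \<forall>n<s. F j $$ n = 0"
    using Min_le[OF fin] unfolding s_def by (fastforce intro: fls_eq0_below_subdegree)
  moreover obtain j where "j < 5" "F j \<noteq> 0" "s = fls_subdegree (F j)"
    using Min_in[OF fin] j0 unfolding s_def by blast
  then have "\<exists>j<5. F j $$ s \<noteq> 0"
    by auto
  ultimately show ?thesis
    using that by blast
qed

definition fls_A4_at :: "(nat \<Rightarrow> complex) \<Rightarrow> complex \<Rightarrow> (nat \<Rightarrow> complex fls) \<Rightarrow> bool" where
  "fls_A4_at \<alpha> z F \<longleftrightarrow>
     (\<forall>j<5. fls_deriv (F j) = F j * alt_sum F j + fls_const (\<alpha> j)) \<and>
     (\<Sum>j<5. F j) = fls_const z + fls_X"

text \<open>In the variable \<open>w = 1/t\<close> at infinity, \<open>d/dw = - w\<^sup>-\<^sup>2 d/dt\<close>; division by \<open>w\<^sup>2\<close> is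
  \<open>fls_shift 2\<close>.\<close>
definition fls_A4_at_infinity :: "(nat \<Rightarrow> complex) \<Rightarrow> (nat \<Rightarrow> complex fls) \<Rightarrow> bool" where
  "fls_A4_at_infinity \<alpha> G \<longleftrightarrow>
     (\<forall>j<5. fls_deriv (G j) = - fls_shift 2 (G j * alt_sum G j + fls_const (\<alpha> j))) \<and>
     (\<Sum>j<5. G j) = fls_X_inv"

lemma alt_sum_fls_nth_below:
  fixes F :: "nat \<Rightarrow> 'a::ab_group_add fls"
  assumes "\<forall>k<5. \<forall>n<s. F k $$ n = 0" and "n < s"
  shows "alt_sum F j $$ n = 0"
  using assms by (simp add: fls_nth_alt_sum alt_sum_def)

text \<open>The leading coefficients of a family with a pole of order \<open>-s > 1\<close> would solve the
  stationary system with zero sum, which has only the trivial solution.\<close>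
lemma fls_family_no_higher_poles:
  fixes F :: "nat \<Rightarrow> complex fls"
  assumes prod: "\<And>s j. s < -1 \<Longrightarrow> \<forall>k<5. \<forall>n<s. F k $$ n = 0 \<Longrightarrow> j < 5 \<Longrightarrow>
                        (F j * alt_sum F j) $$ (s + s) = 0"
    and sum: "\<And>s. s < -1 \<Longrightarrow> (\<Sum>j<5. F j $$ s) = 0"
  shows "\<forall>j<5. \<forall>n < -1. F j $$ n = 0"
proof (rule ccontr)
  assume "\<not> ?thesis"
  then obtain j0 n0 where n0: "j0 < 5" "n0 < -1" "F j0 $$ n0 \<noteq> 0"
    by auto
  obtain s where s: "s \<le> n0" "\<forall>j<5. \<forall>n<s. F j $$ n = 0" "\<exists>j<5. F j $$ s \<noteq> 0"
    using n0(1,3) by (rule fls_family_least_nonzero_index)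
  have "s < -1"
    using s(1) n0(2) by simp
  have "\<forall>j<5. F j $$ s * alt_sum (\<lambda>k. F k $$ s) j = 0"
  proof (intro allI impI)
    fix j :: nat
    assume j: "j < 5"
    have "(F j * alt_sum F j) $$ (s + s) = F j $$ s * alt_sum F j $$ s"
      by (rule fls_times_nth_lower_bounds) (use s(2) j alt_sum_fls_nth_below in auto)
    then show "F j $$ s * alt_sum (\<lambda>k. F k $$ s) j = 0"
      using prod[OF \<open>s < -1\<close> s(2) j] by (simp add: fls_nth_alt_sum)
  qed
  then have "\<forall>j<5. F j $$ s = 0"
    using sum[OF \<open>s < -1\<close>] by (rule alt_sum_system_trivial)
  with s(3) show False
    by blast
qed

lemma fls_A4_at_nth:
  assumes "fls_A4_at \<alpha> z F" and "j < 5"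
  shows "(F j * alt_sum F j) $$ n = of_int (n + 1) * F j $$ (n + 1) - (if n = 0 then \<alpha> j else 0)"
proof -
  have "fls_deriv (F j) $$ n = (F j * alt_sum F j + fls_const (\<alpha> j)) $$ n"
    using assms unfolding fls_A4_at_def by simp
  then show ?thesis
    by simp
qed

lemma fls_A4_at_sum_nth:
  assumes "fls_A4_at \<alpha> z F"
  shows "(\<Sum>j<5. F j $$ n) = (if n = 0 then z else if n = 1 then 1 else 0)"
proof -
  have "(\<Sum>j<5. F j) $$ n = (fls_const z + fls_X) $$ n"
    using assms unfolding fls_A4_at_def by simp
  then show ?thesis
    by (simp add: fls_nth_sum)
qed

lemma fls_A4_at_infinity_nth:
  assumes "fls_A4_at_infinity \<alpha> G" and "j < 5"
  shows "(G j * alt_sum G j) $$ n = - of_int (n - 1) * G j $$ (n - 1) - (if n = 0 then \<alpha> j else 0)"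
proof -
  have "fls_deriv (G j) $$ (n - 2) = (- fls_shift 2 (G j * alt_sum G j + fls_const (\<alpha> j))) $$ (n - 2)"
    using assms unfolding fls_A4_at_infinity_def by simp
  then show ?thesis
    by (simp add: algebra_simps)
qed

lemma fls_A4_at_infinity_sum_nth:
  assumes "fls_A4_at_infinity \<alpha> G"
  shows "(\<Sum>j<5. G j $$ n) = (if n = -1 then 1 else 0)"
proof -
  have "(\<Sum>j<5. G j) $$ n = fls_X_inv $$ n"
    using assms unfolding fls_A4_at_infinity_def by simp
  then show ?thesis
    by (simp add: fls_nth_sum)
qed

lemma fls_A4_at_simple_poles:
  assumes "fls_A4_at \<alpha> z F"
  shows "\<forall>j<5. \<forall>n < -1. F j $$ n = 0"
proof (rule fls_family_no_higher_poles)
  fix s :: int and j :: nat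
  assume "s < -1" "\<forall>k<5. \<forall>n<s. F k $$ n = 0" "j < 5"
  then show "(F j * alt_sum F j) $$ (s + s) = 0"
    using fls_A4_at_nth[OF assms, of j "s + s"] by simp
qed (simp add: fls_A4_at_sum_nth[OF assms])

lemma fls_A4_at_residues:
  assumes "fls_A4_at \<alpha> z F" and "j < 5"
  shows "F j $$ (-1) \<in> {0, 1, -1, 3, -3}"
proof -
  note simple = fls_A4_at_simple_poles[OF assms(1)]
  have "\<forall>j<5. F j $$ (-1) * (1 + alt_sum (\<lambda>k. F k $$ (-1)) j) = 0"
  proof (intro allI impI)
    fix j :: nat
    assume j: "j < 5"
    have "(F j * alt_sum F j) $$ (-1 + -1) = F j $$ (-1) * alt_sum F j $$ (-1)"
      by (rule fls_times_nth_lower_bounds) (use simple j alt_sum_fls_nth_below[OF simple] in auto)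
    then have "- F j $$ (-1) = F j $$ (-1) * alt_sum (\<lambda>k. F k $$ (-1)) j"
      using fls_A4_at_nth[OF assms(1) j, of "-2"] by (simp add: fls_nth_alt_sum)
    then show "F j $$ (-1) * (1 + alt_sum (\<lambda>k. F k $$ (-1)) j) = 0"
      by (simp add: distrib_left neg_eq_iff_add_eq_0)
  qed
  moreover have "(\<Sum>j<5. F j $$ (-1)) = 0"
    by (simp add: fls_A4_at_sum_nth[OF assms(1)])
  ultimately have "\<forall>j<5. F j $$ (-1) \<in> {0, 1, -1, 3, -3}"
    by (rule alt_sum_system_residues)
  with assms(2) show ?thesis
    by blast
qed

lemma fls_A4_at_infinity_simple_pole:
  assumes "fls_A4_at_infinity \<alpha> G"
  shows "\<forall>j<5. \<forall>n < -1. G j $$ n = 0"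
proof (rule fls_family_no_higher_poles)
  fix s :: int and j :: nat
  assume "s < -1" "\<forall>k<5. \<forall>n<s. G k $$ n = 0" "j < 5"
  then show "(G j * alt_sum G j) $$ (s + s) = 0"
    using fls_A4_at_infinity_nth[OF assms, of j "s + s"] by simp
qed (simp add: fls_A4_at_infinity_sum_nth[OF assms])

lemma fls_A4_at_infinity_leading:
  assumes "fls_A4_at_infinity \<alpha> G"
  shows "\<forall>j<5. G j $$ (-1) * alt_sum (\<lambda>k. G k $$ (-1)) j = 0"
    and "(\<Sum>j<5. G j $$ (-1)) = 1"
proof -
  note simple = fls_A4_at_infinity_simple_pole[OF assms]
  show "\<forall>j<5. G j $$ (-1) * alt_sum (\<lambda>k. G k $$ (-1)) j = 0"
  proof (intro allI impI)
    fix j :: nat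
    assume j: "j < 5"
    have "(G j * alt_sum G j) $$ (-1 + -1) = G j $$ (-1) * alt_sum G j $$ (-1)"
      by (rule fls_times_nth_lower_bounds) (use simple j alt_sum_fls_nth_below[OF simple] in auto)
    then show "G j $$ (-1) * alt_sum (\<lambda>k. G k $$ (-1)) j = 0"
      using fls_A4_at_infinity_nth[OF assms j, of "-2"] simple j by (simp add: fls_nth_alt_sum)
  qed
  show "(\<Sum>j<5. G j $$ (-1)) = 1"
    by (simp add: fls_A4_at_infinity_sum_nth[OF assms])
qed

lemma fls_A4_at_infinity_leading_values:
  assumes "fls_A4_at_infinity \<alpha> G" and "j < 5"
  shows "G j $$ (-1) \<in> {0, 1, -1, 1/3, 1/5}"
proof -
  have "\<forall>j<5. G j $$ (-1) \<in> {0, 1, -1, 1/3, 1/5}"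
    using fls_A4_at_infinity_leading[OF assms(1)] by (rule alt_sum_system_infinity)
  with assms(2) show ?thesis
    by blast
qed

lemma fls_A4_at_infinity_difference_nth:
  assumes G: "fls_A4_at_infinity \<alpha> G" and H: "fls_A4_at_infinity \<alpha> H"
    and lead: "\<And>k. k < 5 \<Longrightarrow> G k $$ (-1) = H k $$ (-1)"
    and low: "\<forall>k<5. \<forall>n<s. (G k - H k) $$ n = 0" and "0 \<le> s" and j: "j < 5"
  shows "(G j - H j) $$ s * alt_sum (\<lambda>k. G k $$ (-1)) j +
           G j $$ (-1) * alt_sum (\<lambda>k. (G k - H k) $$ s) j = 0"
proof -
  define K where "K k = G k - H k" for k
  have K_low: "\<forall>k<5. \<forall>n<s. K k $$ n = 0"
    using low unfolding K_def .
  note G_simple = fls_A4_at_infinity_simple_pole[OF G]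
  note H_simple = fls_A4_at_infinity_simple_pole[OF H]
  have "fls_deriv (K j) = - fls_shift 2 (K j * alt_sum G j + H j * alt_sum K j)"
    using G H j unfolding fls_A4_at_infinity_def K_def alt_sum_diff
    by (simp add: fls_eq_iff algebra_simps)
  from arg_cong[OF this, of "\<lambda>X. X $$ (s - 3)"]
  have "(K j * alt_sum G j) $$ (s - 1) + (H j * alt_sum K j) $$ (s - 1) = - (of_int (s - 2) * K j $$ (s - 2))"
    by (simp add: algebra_simps)
  also have "\<dots> = 0"
    using K_low j by simp
  finally have "(K j * alt_sum G j) $$ (s + -1) + (H j * alt_sum K j) $$ (-1 + s) = 0"
    by simp
  moreover have "(K j * alt_sum G j) $$ (s + -1) = K j $$ s * alt_sum G j $$ (-1)"
    by (rule fls_times_nth_lower_bounds)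
      (use K_low j alt_sum_fls_nth_below[OF G_simple] \<open>0 \<le> s\<close> in auto)
  moreover have "(H j * alt_sum K j) $$ (-1 + s) = H j $$ (-1) * alt_sum K j $$ s"
    by (rule fls_times_nth_lower_bounds)
      (use H_simple j alt_sum_fls_nth_below[OF K_low] in auto)
  ultimately have "K j $$ s * alt_sum (\<lambda>k. G k $$ (-1)) j + G j $$ (-1) * alt_sum (\<lambda>k. K k $$ s) j = 0"
    using lead[OF j] by (simp add: fls_nth_alt_sum)
  then show ?thesis
    unfolding K_def .
qed

text \<open>Two formal solutions at infinity with the same leading coefficients agree: the first
  coefficients in which they differ would solve the linearized stationary system.\<close>
lemma fls_A4_at_infinity_unique:
  assumes G: "fls_A4_at_infinity \<alpha> G" and H: "fls_A4_at_infinity \<alpha> H"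
    and lead: "\<And>j. j < 5 \<Longrightarrow> G j $$ (-1) = H j $$ (-1)"
  shows "\<forall>j<5. G j = H j"
proof (rule ccontr)
  define K where "K j = G j - H j" for j
  assume "\<not> ?thesis"
  then obtain j0 n0 where "j0 < 5" "K j0 $$ n0 \<noteq> 0"
    unfolding K_def by (auto simp: fls_eq_iff)
  then obtain s where s: "\<forall>j<5. \<forall>n<s. K j $$ n = 0" "\<exists>j<5. K j $$ s \<noteq> 0"
    by (rule fls_family_least_nonzero_index)
  have K_low: "K j $$ n = 0" if "j < 5" "n \<le> -1" for j n
    using fls_A4_at_infinity_simple_pole[OF G] fls_A4_at_infinity_simple_pole[OF H] lead that
    unfolding K_def by (cases "n = -1") auto
  have "0 \<le> s"
  proof (rule ccontr)
    assume "\<not> 0 \<le> s"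
    with s(2) K_low show False
      by force
  qed
  define a where "a = (\<lambda>k. G k $$ (-1))"
  define C where "C = (\<lambda>k. K k $$ s)"
  have "C j * alt_sum a j + a j * alt_sum C j = 0" if "j < 5" for j
    using fls_A4_at_infinity_difference_nth[OF G H lead _ \<open>0 \<le> s\<close> that] s(1)
    unfolding C_def a_def K_def by simp
  moreover have "(\<Sum>j<5. C j) = 0"
    using fls_A4_at_infinity_sum_nth[OF G, of s] fls_A4_at_infinity_sum_nth[OF H, of s]
    unfolding C_def K_def by (simp add: sum_subtractf)
  ultimately have "\<forall>j<5. C j = 0"
    using alt_sum_system_linearized[OF fls_A4_at_infinity_leading[OF G]] unfolding a_def by blast
  with s(2) show False
    unfolding C_def by blast
qed

section \<open>Laurent expansions of rational solutions\<close>

lemma analytic_on_poly [analytic_intros]: "(\<lambda>z. poly p z) analytic_on A"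
proof -
  have "(\<lambda>z. poly p z) holomorphic_on UNIV"
    by (intro holomorphic_intros)
  then show ?thesis
    using analytic_on_open analytic_on_subset by blast
qed

lemma rat_fun_analytic_off_finite:
  assumes "rat_fun g"
  obtains Z where "finite Z" "\<And>t. t \<notin> Z \<Longrightarrow> g analytic_on {t}"
proof -
  obtain p q where q: "q \<noteq> 0" and g: "g = (\<lambda>t. poly p t / poly q t)"
    using assms unfolding rat_fun_def by blast
  show ?thesis
  proof (rule that)
    show "finite {t. poly q t = 0}"
      using q by (rule poly_roots_finite)
    show "g analytic_on {t}" if "t \<notin> {t. poly q t = 0}" for t
      using that unfolding g by (intro analytic_intros) auto
  qed
qed

lemma rat_fun_finite_poles:
  assumes "rat_fun g"
  shows "finite {p. is_pole g p}"
proof -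
  obtain Z where "finite Z" "\<And>t. t \<notin> Z \<Longrightarrow> g analytic_on {t}"
    using rat_fun_analytic_off_finite[OF assms] by blast
  moreover from this(2) have "{p. is_pole g p} \<subseteq> Z"
    using analytic_at_imp_no_pole by blast
  ultimately show ?thesis
    using finite_subset by blast
qed

lemma rat_fun_meromorphic:
  assumes "rat_fun g"
  shows "g meromorphic_on A"
proof -
  obtain p q where "g = (\<lambda>t. poly p t / poly q t)"
    using assms unfolding rat_fun_def by blast
  then show ?thesis
    by (simp, intro meromorphic_intros analytic_on_imp_meromorphic_on analytic_on_poly)
qed

lemma rat_fun_meromorphic_at_infinity:
  assumes "rat_fun g"
  shows "(\<lambda>w. g (1 / w)) meromorphic_on A"
proof -
  have poly_inverse: "(\<lambda>w. poly p (1 / w)) meromorphic_on A" for p :: "complex poly"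
  proof -
    have "(\<lambda>w. \<Sum>i\<le>degree p. coeff p i * (1 / w) ^ i) meromorphic_on A"
      by (intro meromorphic_intros)
    then show ?thesis
      by (simp add: poly_altdef)
  qed
  from assms show ?thesis
    unfolding rat_fun_def by (auto intro!: meromorphic_intros poly_inverse)
qed

lemma rat_fun_reflect:
  assumes "rat_fun g"
  shows "rat_fun (\<lambda>t. - g (- t))"
proof -
  obtain p q where q: "q \<noteq> 0" and g: "g = (\<lambda>t. poly p t / poly q t)"
    using assms unfolding rat_fun_def by blast
  have "pcompose q [:0, -1:] \<noteq> 0"
    using q pcompose_eq_0 by fastforce
  moreover have "(\<lambda>t. - g (- t)) =
      (\<lambda>t. poly (- pcompose p [:0, -1:]) t / poly (pcompose q [:0, -1:]) t)"
    unfolding g by (simp add: poly_pcompose)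
  ultimately show ?thesis
    unfolding rat_fun_def by blast
qed

definition laurent_at_infinity :: "(complex \<Rightarrow> complex) \<Rightarrow> complex fls" where
  "laurent_at_infinity g = laurent_expansion (\<lambda>w. g (1 / w)) 0"

lemma rat_fun_has_laurent_expansion:
  assumes "rat_fun g"
  shows "(\<lambda>w. g (z + w)) has_laurent_expansion laurent_expansion g z"
  using rat_fun_meromorphic[OF assms, of UNIV] by (rule meromorphic_on_imp_has_laurent_expansion) simp

lemma rat_fun_has_laurent_expansion_at_infinity:
  assumes "rat_fun g"
  shows "(\<lambda>w. g (1 / w)) has_laurent_expansion laurent_at_infinity g"
  unfolding laurent_at_infinity_def
  using rat_fun_meromorphic_at_infinity[OF assms, of UNIV]
  by (rule meromorphic_on_imp_has_laurent_expansion[where z = 0, simplified]) simp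

lemma res_inf_eq_laurent_at_infinity_nth:
  assumes "(\<lambda>w. g (1 / w)) has_laurent_expansion G"
  shows "res_inf g = - G $$ 1"
proof -
  have "(\<lambda>w. g (1 / w) * w powi (-2)) has_laurent_expansion fls_shift 2 G"
    using assms by (rule has_laurent_expansion_shift')
  then have "(\<lambda>w. g (1 / w) / w ^ 2) has_laurent_expansion fls_shift 2 G"
    by (simp add: power_int_minus divide_inverse)
  then show ?thesis
    unfolding res_inf_def by (simp add: has_laurent_expansion_residue_0)
qed

lemma eventually_cofinite_imp_eventually_at:
  fixes P :: "'a::t1_space \<Rightarrow> bool"
  assumes "eventually P cofinite"
  shows "eventually P (at x)"
  using assms finite_imp_sparse[of "{x. \<not> P x}" UNIV]
  by (auto simp: eventually_cofinite eventually_cosparse intro: eventually_cosparse_imp_eventually_at)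

lemma eventually_cofinite_shift:
  fixes z :: "'a::ab_group_add"
  assumes "eventually P cofinite"
  shows "eventually (\<lambda>w. P (z + w)) cofinite"
proof -
  have "{w. \<not> P (z + w)} = (\<lambda>t. t - z) ` {t. \<not> P t}"
    by (force simp: algebra_simps)
  then show ?thesis
    using assms by (simp add: eventually_cofinite)
qed

lemma eventually_cofinite_inverse:
  fixes P :: "'a::field \<Rightarrow> bool"
  assumes "eventually P cofinite"
  shows "eventually (\<lambda>w. P (1 / w)) cofinite"
proof -
  have "{w. \<not> P (1 / w)} \<subseteq> (\<lambda>t. 1 / t) ` {t. \<not> P t}"
  proof
    fix w
    assume "w \<in> {w. \<not> P (1 / w)}"
    then show "w \<in> (\<lambda>t. 1 / t) ` {t. \<not> P t}"
      by (intro image_eqI[of _ _ "1 / w"]) auto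
  qed
  then show ?thesis
    using assms finite_subset by (auto simp: eventually_cofinite)
qed

definition A4_holds_at :: "(nat \<Rightarrow> complex) \<Rightarrow> (nat \<Rightarrow> complex \<Rightarrow> complex) \<Rightarrow> complex \<Rightarrow> bool" where
  "A4_holds_at \<alpha> f t \<longleftrightarrow>
     (\<forall>j<5. (f j has_field_derivative (f j t * alt_sum (\<lambda>k. f k t) j + \<alpha> j)) (at t)) \<and>
     (\<Sum>j<5. f j t) = t"

lemma A4_rational_solution_iff:
  "A4_rational_solution \<alpha> f \<longleftrightarrow> (\<forall>j<5. rat_fun (f j)) \<and> eventually (A4_holds_at \<alpha> f) cofinite"
  unfolding A4_rational_solution_def A4_holds_at_def alt_sum_def by simp

lemma A4_rational_solution_rat_fun:
  assumes "A4_rational_solution \<alpha> f" and "j < 5"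
  shows "rat_fun (f j)"
  using assms unfolding A4_rational_solution_def by blast

lemma A4_holds_at_deriv_shift:
  assumes "A4_holds_at \<alpha> f (z + w)" and "j < 5"
  shows "deriv (\<lambda>w. f j (z + w)) w = f j (z + w) * alt_sum (\<lambda>k. f k (z + w)) j + \<alpha> j"
proof -
  have "(f j has_field_derivative f j (z + w) * alt_sum (\<lambda>k. f k (z + w)) j + \<alpha> j) (at (w + z))"
    using assms by (simp add: A4_holds_at_def add.commute)
  then show ?thesis
    by (simp add: DERIV_shift add.commute DERIV_imp_deriv)
qed

lemma A4_holds_at_deriv_inverse:
  assumes "A4_holds_at \<alpha> f (1 / w)" and "w \<noteq> 0" and "j < 5"
  shows "deriv (\<lambda>w. f j (1 / w)) w =
           - ((f j (1 / w) * alt_sum (\<lambda>k. f k (1 / w)) j + \<alpha> j) * w powi (-2))"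
proof -
  have "(f j has_field_derivative f j (1 / w) * alt_sum (\<lambda>k. f k (1 / w)) j + \<alpha> j) (at (inverse w))"
    using assms by (simp add: A4_holds_at_def inverse_eq_divide)
  from DERIV_chain2[OF this DERIV_inverse] assms(2)
  have "((\<lambda>x. f j (inverse x)) has_field_derivative
      - ((f j (1 / w) * alt_sum (\<lambda>k. f k (1 / w)) j + \<alpha> j) * w powi (-2))) (at w)"
    by (simp add: power_int_minus power2_eq_square)
  then show ?thesis
    by (simp add: DERIV_imp_deriv inverse_eq_divide)
qed

lemma has_laurent_expansion_alt_sum_rhs:
  assumes "\<And>k. k < 5 \<Longrightarrow> h k has_laurent_expansion F k" and "j < 5"
  shows "(\<lambda>w. h j w * alt_sum (\<lambda>k. h k w) j + c) has_laurent_expansion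
           F j * alt_sum F j + fls_const c"
  unfolding alt_sum_def using assms by (intro laurent_expansion_intros) auto

lemma A4_rational_solution_fls_A4_at:
  assumes sol: "A4_rational_solution \<alpha> f"
  shows "fls_A4_at \<alpha> z (\<lambda>j. laurent_expansion (f j) z)"
proof -
  define L where "L j = laurent_expansion (f j) z" for j
  have L: "(\<lambda>w. f j (z + w)) has_laurent_expansion L j" if "j < 5" for j
    unfolding L_def by (intro rat_fun_has_laurent_expansion A4_rational_solution_rat_fun[OF sol that])
  have holds: "\<forall>\<^sub>F w in at 0. A4_holds_at \<alpha> f (z + w)"
    using sol unfolding A4_rational_solution_iff
    by (intro eventually_cofinite_imp_eventually_at eventually_cofinite_shift) simp
  have "fls_deriv (L j) = L j * alt_sum L j + fls_const (\<alpha> j)" if j: "j < 5" for j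
  proof -
    have "\<forall>\<^sub>F w in at 0. deriv (\<lambda>w. f j (z + w)) w = f j (z + w) * alt_sum (\<lambda>k. f k (z + w)) j + \<alpha> j"
      using holds by eventually_elim (rule A4_holds_at_deriv_shift[OF _ j])
    moreover have "deriv (\<lambda>w. f j (z + w)) has_laurent_expansion fls_deriv (L j)"
      by (intro has_laurent_expansion_deriv L j)
    ultimately have "(\<lambda>w. f j (z + w) * alt_sum (\<lambda>k. f k (z + w)) j + \<alpha> j) has_laurent_expansion fls_deriv (L j)"
      by (subst (asm) has_laurent_expansion_cong) auto
    then show ?thesis
      using has_laurent_expansion_alt_sum_rhs[OF L j] by (rule has_laurent_expansion_unique)
  qed
  moreover have "(\<Sum>j<5. L j) = fls_const z + fls_X"
  proof -
    have "\<forall>\<^sub>F w in at 0. (\<Sum>j<5. f j (z + w)) = z + w"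
      using holds by eventually_elim (simp add: A4_holds_at_def)
    moreover have "(\<lambda>w. \<Sum>j<5. f j (z + w)) has_laurent_expansion (\<Sum>j<5. L j)"
      by (intro has_laurent_expansion_sum L) simp
    ultimately have "(\<lambda>w. z + w) has_laurent_expansion (\<Sum>j<5. L j)"
      by (subst (asm) has_laurent_expansion_cong) auto
    then show ?thesis
      by (rule has_laurent_expansion_unique) (intro laurent_expansion_intros)
  qed
  ultimately show ?thesis
    unfolding fls_A4_at_def L_def by blast
qed

lemma A4_rational_solution_fls_A4_at_infinity:
  assumes sol: "A4_rational_solution \<alpha> f"
  shows "fls_A4_at_infinity \<alpha> (\<lambda>j. laurent_at_infinity (f j))"
proof -
  define L where "L j = laurent_at_infinity (f j)" for j
  have L: "(\<lambda>w. f j (1 / w)) has_laurent_expansion L j" if "j < 5" for j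
    unfolding L_def by (intro rat_fun_has_laurent_expansion_at_infinity A4_rational_solution_rat_fun[OF sol that])
  have "\<forall>\<^sub>F w in at 0. A4_holds_at \<alpha> f (1 / w)"
    using sol unfolding A4_rational_solution_iff
    by (intro eventually_cofinite_imp_eventually_at eventually_cofinite_inverse) simp
  then have holds: "\<forall>\<^sub>F w in at 0. w \<noteq> 0 \<and> A4_holds_at \<alpha> f (1 / w)"
    by (simp add: eventually_at_filter)
  have "fls_deriv (L j) = - fls_shift 2 (L j * alt_sum L j + fls_const (\<alpha> j))" if j: "j < 5" for j
  proof -
    let ?rhs = "\<lambda>w. f j (1 / w) * alt_sum (\<lambda>k. f k (1 / w)) j + \<alpha> j"
    have "\<forall>\<^sub>F w in at 0. deriv (\<lambda>w. f j (1 / w)) w = - (?rhs w * w powi (-2))"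
      using holds by eventually_elim (simp add: A4_holds_at_deriv_inverse j)
    moreover have "deriv (\<lambda>w. f j (1 / w)) has_laurent_expansion fls_deriv (L j)"
      by (intro has_laurent_expansion_deriv L j)
    ultimately have "(\<lambda>w. - (?rhs w * w powi (-2))) has_laurent_expansion fls_deriv (L j)"
      by (subst (asm) has_laurent_expansion_cong) auto
    moreover have "(\<lambda>w. - (?rhs w * w powi (-2))) has_laurent_expansion
        - fls_shift 2 (L j * alt_sum L j + fls_const (\<alpha> j))"
      by (intro has_laurent_expansion_minus has_laurent_expansion_shift'
          has_laurent_expansion_alt_sum_rhs L j)
    ultimately show ?thesis
      by (rule has_laurent_expansion_unique)
  qed
  moreover have "(\<Sum>j<5. L j) = fls_X_inv"
  proof -
    have "\<forall>\<^sub>F w in at 0. (\<Sum>j<5. f j (1 / w)) = inverse w"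
      using holds by eventually_elim (simp add: A4_holds_at_def inverse_eq_divide)
    moreover have "(\<lambda>w. \<Sum>j<5. f j (1 / w)) has_laurent_expansion (\<Sum>j<5. L j)"
      by (intro has_laurent_expansion_sum L) simp
    ultimately have "inverse has_laurent_expansion (\<Sum>j<5. L j)"
      by (subst (asm) has_laurent_expansion_cong) auto
    then show ?thesis
      by (rule has_laurent_expansion_unique) (intro laurent_expansion_intros)
  qed
  ultimately show ?thesis
    unfolding fls_A4_at_infinity_def L_def by blast
qed

lemma A4_simple_poles:
  assumes "A4_rational_solution \<alpha> f" and "j < 5" and "n < -1"
  shows "laurent_expansion (f j) z $$ n = 0"
  using fls_A4_at_simple_poles[OF A4_rational_solution_fls_A4_at[OF assms(1)]] assms(2,3) by blast

lemma A4_simple_pole_at_infinity: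
  assumes "A4_rational_solution \<alpha> f" and "j < 5" and "n < -1"
  shows "laurent_at_infinity (f j) $$ n = 0"
  using fls_A4_at_infinity_simple_pole[OF A4_rational_solution_fls_A4_at_infinity[OF assms(1)]] assms(2,3)
  by blast

lemma fls_subdegree_neg_iff:
  fixes F :: "'a::zero fls"
  assumes "\<And>n. n < -1 \<Longrightarrow> F $$ n = 0"
  shows "fls_subdegree F < 0 \<longleftrightarrow> F $$ (-1) \<noteq> 0"
proof
  assume neg: "fls_subdegree F < 0"
  then have "F $$ fls_subdegree F \<noteq> 0"
    by (intro nth_fls_subdegree_nonzero) auto
  with assms have "\<not> fls_subdegree F < -1"
    by blast
  with neg have "fls_subdegree F = -1"
    by simp
  with \<open>F $$ fls_subdegree F \<noteq> 0\<close> show "F $$ (-1) \<noteq> 0"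
    by simp
qed (use fls_subdegree_leI in fastforce)

lemma A4_is_pole_iff_residue:
  assumes "A4_rational_solution \<alpha> f" and "j < 5"
  shows "is_pole (f j) z \<longleftrightarrow> residue (f j) z \<noteq> 0"
proof -
  have L: "(\<lambda>w. f j (z + w)) has_laurent_expansion laurent_expansion (f j) z"
    by (intro rat_fun_has_laurent_expansion A4_rational_solution_rat_fun[OF assms(1,2)])
  show ?thesis
    unfolding is_pole_fls_subdegree_iff[OF L] has_laurent_expansion_residue[OF L]
    using A4_simple_poles[OF assms] by (simp add: fls_subdegree_neg_iff)
qed

lemma A4_residue_values:
  assumes "A4_rational_solution \<alpha> f" and "j < 5" and "is_pole (f j) z"
  shows "residue (f j) z \<in> {1, -1, 3, -3}"
proof -
  have L: "(\<lambda>w. f j (z + w)) has_laurent_expansion laurent_expansion (f j) z"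
    by (intro rat_fun_has_laurent_expansion A4_rational_solution_rat_fun[OF assms(1,2)])
  have "residue (f j) z \<in> {0, 1, -1, 3, -3}"
    using fls_A4_at_residues[OF A4_rational_solution_fls_A4_at[OF assms(1)] assms(2)]
    by (simp add: has_laurent_expansion_residue[OF L] fls_residue_def)
  moreover have "residue (f j) z \<noteq> 0"
    using A4_is_pole_iff_residue[OF assms(1,2)] assms(3) by blast
  ultimately show ?thesis
    by blast
qed

section \<open>The symmetry \<open>t \<mapsto> -t\<close>\<close>

definition reflect :: "(nat \<Rightarrow> complex \<Rightarrow> complex) \<Rightarrow> nat \<Rightarrow> complex \<Rightarrow> complex" where
  "reflect f j = (\<lambda>t. - f j (- t))"

lemma A4_holds_at_reflect:
  assumes "A4_holds_at \<alpha> f (- t)"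
  shows "A4_holds_at \<alpha> (reflect f) t"
  unfolding A4_holds_at_def
proof (intro conjI allI impI)
  fix j :: nat
  assume j: "j < 5"
  have "(f j has_field_derivative f j (- t) * alt_sum (\<lambda>k. f k (- t)) j + \<alpha> j) (at (- t))"
    using assms j by (simp add: A4_holds_at_def)
  moreover have "((\<lambda>x. - x) has_field_derivative -1) (at t)"
    by (auto intro!: derivative_eq_intros)
  ultimately have "((\<lambda>x. - f j (- x)) has_field_derivative
      - ((f j (- t) * alt_sum (\<lambda>k. f k (- t)) j + \<alpha> j) * -1)) (at t)"
    by (rule DERIV_minus[OF DERIV_chain2])
  then show "(reflect f j has_field_derivative reflect f j t * alt_sum (\<lambda>k. reflect f k t) j + \<alpha> j) (at t)"
    unfolding reflect_def alt_sum_uminus by (simp add: add.commute)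
next
  show "(\<Sum>j<5. reflect f j t) = t"
    using assms unfolding A4_holds_at_def reflect_def by (simp add: sum_negf)
qed

lemma A4_rational_solution_reflect:
  assumes "A4_rational_solution \<alpha> f"
  shows "A4_rational_solution \<alpha> (reflect f)"
proof -
  have "\<forall>j<5. rat_fun (reflect f j)"
    using assms unfolding A4_rational_solution_iff reflect_def by (auto intro: rat_fun_reflect)
  moreover have "\<forall>\<^sub>F t in cofinite. A4_holds_at \<alpha> f (- t)"
  proof -
    have "{t. \<not> A4_holds_at \<alpha> f (- t)} = uminus ` {t. \<not> A4_holds_at \<alpha> f t}"
      by (force simp: image_iff)
    then show ?thesis
      using assms unfolding A4_rational_solution_iff eventually_cofinite by simp
  qed
  then have "\<forall>\<^sub>F t in cofinite. A4_holds_at \<alpha> (reflect f) t"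
    by eventually_elim (rule A4_holds_at_reflect)
  ultimately show ?thesis
    unfolding A4_rational_solution_iff by blast
qed

abbreviation fps_neg_X :: "complex fps" where
  "fps_neg_X \<equiv> fps_const (-1) * fps_X"

lemma fls_compose_fps_neg_X_nth: "fls_compose_fps F fps_neg_X $$ n = F $$ n * (-1) powi n"
  by (rule fls_nth_fls_compose_fps_linear) simp

lemma has_laurent_expansion_compose_uminus:
  assumes "g has_laurent_expansion F"
  shows "(\<lambda>w. g (- w)) has_laurent_expansion fls_compose_fps F fps_neg_X"
proof -
  have "(\<lambda>w::complex. - w) has_laurent_expansion - fls_X"
    by (intro laurent_expansion_intros)
  moreover have "fps_to_fls fps_neg_X = - fls_X"
    by (simp add: fls_eq_iff) arith
  ultimately have "(\<lambda>w::complex. - w) has_laurent_expansion fps_to_fls fps_neg_X"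
    by simp
  then have "(g \<circ> uminus) has_laurent_expansion fls_compose_fps F fps_neg_X"
    by (rule has_laurent_expansion_compose[OF assms]) (auto simp: fps_eq_iff)
  then show ?thesis
    by (simp add: o_def)
qed

lemma laurent_expansion_reflect:
  assumes "rat_fun g"
  shows "laurent_expansion (\<lambda>t. - g (- t)) z = - fls_compose_fps (laurent_expansion g (- z)) fps_neg_X"
proof (rule laurent_expansion_eqI)
  have "(\<lambda>w. - g (- z + - w)) has_laurent_expansion - fls_compose_fps (laurent_expansion g (- z)) fps_neg_X"
    by (intro has_laurent_expansion_minus has_laurent_expansion_compose_uminus
        rat_fun_has_laurent_expansion assms)
  then show "(\<lambda>w. - g (- (z + w))) has_laurent_expansion - fls_compose_fps (laurent_expansion g (- z)) fps_neg_X"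
    by simp
qed

lemma laurent_at_infinity_reflect:
  assumes "rat_fun g"
  shows "laurent_at_infinity (\<lambda>t. - g (- t)) = - fls_compose_fps (laurent_at_infinity g) fps_neg_X"
proof -
  have "(\<lambda>w. - g (1 / - w)) has_laurent_expansion - fls_compose_fps (laurent_at_infinity g) fps_neg_X"
    using has_laurent_expansion_compose_uminus[OF rat_fun_has_laurent_expansion_at_infinity[OF assms]]
    by (rule has_laurent_expansion_minus)
  then have "(\<lambda>w. - g (- (1 / w))) has_laurent_expansion - fls_compose_fps (laurent_at_infinity g) fps_neg_X"
    by simp
  then show ?thesis
    unfolding laurent_at_infinity_def by (rule laurent_expansion_0_eqI)
qed

text \<open>The reflected solution has the same leading coefficients at infinity, hence by uniqueness of
  the formal solution there the same expansion at infinity.\<close>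
lemma A4_laurent_at_infinity_reflect:
  assumes sol: "A4_rational_solution \<alpha> f" and j: "j < 5"
  shows "laurent_at_infinity (reflect f j) = laurent_at_infinity (f j)"
proof -
  have reflect: "laurent_at_infinity (reflect f k) = - fls_compose_fps (laurent_at_infinity (f k)) fps_neg_X"
    if "k < 5" for k
    unfolding reflect_def
    by (intro laurent_at_infinity_reflect A4_rational_solution_rat_fun[OF sol that])
  have "\<forall>k<5. laurent_at_infinity (reflect f k) = laurent_at_infinity (f k)"
    by (rule fls_A4_at_infinity_unique
        [OF A4_rational_solution_fls_A4_at_infinity[OF A4_rational_solution_reflect[OF sol]]
            A4_rational_solution_fls_A4_at_infinity[OF sol]])
      (simp add: reflect fls_compose_fps_neg_X_nth)
  with j show ?thesis
    by blast
qed

lemma meromorphic_on_UNIV_zero_near_infinity: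
  fixes g :: "complex \<Rightarrow> complex"
  assumes mero: "g meromorphic_on UNIV" and zero: "\<forall>\<^sub>F w in at 0. g (1 / w) = 0"
  shows "\<forall>\<^sub>F t in at c. g t = 0"
proof -
  have "\<forall>\<^sub>F t in at_infinity. g t = 0"
    using zero by (simp add: at_to_infinity eventually_filtermap inverse_eq_divide)
  then obtain b where b: "\<And>t. norm t \<ge> b \<Longrightarrow> g t = 0"
    by (auto simp: eventually_at_infinity)
  define z0 :: complex where "z0 = of_real (\<bar>b\<bar> + 1)"
  have "\<forall>\<^sub>F t in at z0. g t = 0"
  proof (rule eventually_at_in_open'[THEN eventually_mono])
    show "open {t. b < norm t}"
      by (intro open_Collect_less continuous_intros)
    show "z0 \<in> {t. b < norm t}"
      by (simp add: z0_def)
  qed (use b in auto)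
  have "\<not> (\<forall>\<^sub>F t in at z0. g t \<noteq> 0)"
  proof
    assume "\<forall>\<^sub>F t in at z0. g t \<noteq> 0"
    with \<open>\<forall>\<^sub>F t in at z0. g t = 0\<close> have "\<forall>\<^sub>F t in at z0. False"
      by eventually_elim simp
    then show False
      by simp
  qed
  then have "\<not> (\<forall>\<^sub>F t in cosparse UNIV. g t \<noteq> 0)"
    by (auto simp: eventually_cosparse_open_eq)
  then have "\<forall>\<^sub>F t in cosparse UNIV. g t = 0"
    using meromorphic_imp_constant_or_avoid[OF mero, of 0] by auto
  then show ?thesis
    by (simp add: eventually_cosparse_open_eq)
qed

lemma A4_rational_solution_odd:
  assumes sol: "A4_rational_solution \<alpha> f" and j: "j < 5"
  shows "\<forall>\<^sub>F t in at c. f j (- t) = - f j t"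
proof -
  define h where "h t = f j t - reflect f j t" for t
  have rat: "rat_fun (f j)" "rat_fun (reflect f j)"
    using A4_rational_solution_rat_fun A4_rational_solution_reflect sol j by blast+
  have "h meromorphic_on UNIV"
    unfolding h_def using rat by (intro meromorphic_intros rat_fun_meromorphic)
  moreover have "\<forall>\<^sub>F w in at 0. h (1 / w) = 0"
  proof -
    have "\<forall>\<^sub>F w in at 0. eval_fls (laurent_at_infinity (f j)) w = f j (1 / w)"
      using rat_fun_has_laurent_expansion_at_infinity[OF rat(1)] by (simp add: has_laurent_expansion_def)
    moreover have "\<forall>\<^sub>F w in at 0. eval_fls (laurent_at_infinity (f j)) w = reflect f j (1 / w)"
      using rat_fun_has_laurent_expansion_at_infinity[OF rat(2)]
      by (simp add: has_laurent_expansion_def A4_laurent_at_infinity_reflect[OF sol j])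
    ultimately show ?thesis
      by eventually_elim (simp add: h_def)
  qed
  ultimately have "\<forall>\<^sub>F t in at c. h t = 0"
    by (rule meromorphic_on_UNIV_zero_near_infinity)
  then show ?thesis
    by eventually_elim (simp add: h_def reflect_def add_eq_0_iff)
qed

lemma A4_laurent_expansion_uminus:
  assumes sol: "A4_rational_solution \<alpha> f" and j: "j < 5"
  shows "laurent_expansion (f j) z = - fls_compose_fps (laurent_expansion (f j) (- z)) fps_neg_X"
proof -
  have "\<forall>\<^sub>F t in at z. f j t = - f j (- t)"
    using A4_rational_solution_odd[OF sol j, of z] by eventually_elim simp
  then have "laurent_expansion (f j) z = laurent_expansion (\<lambda>t. - f j (- t)) z"
    by (rule laurent_expansion_cong) simp
  also have "\<dots> = - fls_compose_fps (laurent_expansion (f j) (- z)) fps_neg_X"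
    by (intro laurent_expansion_reflect A4_rational_solution_rat_fun[OF sol j])
  finally show ?thesis .
qed

lemma A4_residue_uminus:
  assumes "A4_rational_solution \<alpha> f" and "j < 5"
  shows "residue (f j) (- z) = residue (f j) z"
proof -
  have "residue (f j) w = laurent_expansion (f j) w $$ (-1)" for w
    using has_laurent_expansion_residue[OF rat_fun_has_laurent_expansion[OF A4_rational_solution_rat_fun[OF assms]]]
    by simp
  then show ?thesis
    by (simp add: A4_laurent_expansion_uminus[OF assms, of z] fls_compose_fps_neg_X_nth)
qed

lemma A4_laurent_at_infinity_nth_0:
  assumes sol: "A4_rational_solution \<alpha> f" and j: "j < 5"
  shows "laurent_at_infinity (f j) $$ 0 = 0"
proof -
  have "laurent_at_infinity (f j) = - fls_compose_fps (laurent_at_infinity (f j)) fps_neg_X"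
    using A4_laurent_at_infinity_reflect[OF assms] laurent_at_infinity_reflect[OF A4_rational_solution_rat_fun[OF assms]]
    unfolding reflect_def by simp
  then have "laurent_at_infinity (f j) $$ 0 = - laurent_at_infinity (f j) $$ 0"
    by (metis fls_compose_fps_neg_X_nth fls_uminus_nth mult_1_right power_int_0_right)
  then show ?thesis
    by simp
qed

section \<open>Partial fractions\<close>

lemma has_laurent_expansion_one_over: "(\<lambda>w::complex. 1 / w) has_laurent_expansion fls_X_inv"
proof -
  have "inverse has_laurent_expansion (fls_X_inv :: complex fls)"
    by (intro laurent_expansion_intros)
  then show ?thesis
    by (simp add: inverse_eq_divide[abs_def])
qed

lemma laurent_expansion_simple_fraction:
  fixes d c z :: complex
  shows "(\<lambda>w. d / (z + w - c)) has_laurent_expansion laurent_expansion (\<lambda>t. d / (t - c)) z"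
    and "n < 0 \<Longrightarrow> laurent_expansion (\<lambda>t. d / (t - c)) z $$ n = (if n = -1 \<and> c = z then d else 0)"
proof -
  have "\<exists>E. (\<lambda>w. d / (z + w - c)) has_laurent_expansion E \<and>
          (\<forall>n<0. E $$ n = (if n = -1 \<and> c = z then d else 0))"
  proof (cases "c = z")
    case True
    have "(\<lambda>w. d * inverse w) has_laurent_expansion fls_const d * fls_X_inv"
      by (intro laurent_expansion_intros)
    then show ?thesis
      using True by (intro exI[of _ "fls_const d * fls_X_inv"]) (simp add: divide_inverse)
  next
    case False
    then have "(\<lambda>w. d / (z + w - c)) analytic_on {0}"
      by (intro analytic_intros) auto
    then have "(\<lambda>w. d / (z + w - c)) has_laurent_expansion fps_to_fls (fps_expansion (\<lambda>w. d / (z + w - c)) 0)"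
      by (intro has_laurent_expansion_fps analytic_at_imp_has_fps_expansion_0)
    then show ?thesis
      using False by (intro exI) auto
  qed
  then obtain E where E: "(\<lambda>w. d / (z + w - c)) has_laurent_expansion E"
    and E_neg: "\<forall>n<0. E $$ n = (if n = -1 \<and> c = z then d else 0)"
    by blast
  have "laurent_expansion (\<lambda>t. d / (t - c)) z = E"
    using E by (intro laurent_expansion_eqI) simp
  then show "(\<lambda>w. d / (z + w - c)) has_laurent_expansion laurent_expansion (\<lambda>t. d / (t - c)) z"
    and "n < 0 \<Longrightarrow> laurent_expansion (\<lambda>t. d / (t - c)) z $$ n = (if n = -1 \<and> c = z then d else 0)"
    using E E_neg by auto
qed

lemma laurent_at_infinity_simple_fraction:
  fixes d c :: complex
  shows "(\<lambda>w. d / (1 / w - c)) has_laurent_expansion laurent_at_infinity (\<lambda>t. d / (t - c))"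
    and "n \<le> 0 \<Longrightarrow> laurent_at_infinity (\<lambda>t. d / (t - c)) $$ n = 0"
    and "laurent_at_infinity (\<lambda>t. d / (t - c)) $$ 1 = d"
proof -
  define h where "h w = d * w / (1 - c * w)" for w
  have H: "h has_fps_expansion fps_expansion h 0"
    unfolding h_def by (intro analytic_at_imp_has_fps_expansion_0 analytic_intros) auto
  have "\<forall>\<^sub>F w in at 0. h w = d / (1 / w - c)"
    by (auto simp: eventually_at_filter h_def field_simps)
  then have L: "(\<lambda>w. d / (1 / w - c)) has_laurent_expansion fps_to_fls (fps_expansion h 0)"
    using has_laurent_expansion_fps[OF H] by (subst (asm) has_laurent_expansion_cong) auto
  then have eq: "laurent_at_infinity (\<lambda>t. d / (t - c)) = fps_to_fls (fps_expansion h 0)"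
    unfolding laurent_at_infinity_def by (intro laurent_expansion_0_eqI) simp
  then show "(\<lambda>w. d / (1 / w - c)) has_laurent_expansion laurent_at_infinity (\<lambda>t. d / (t - c))"
    using L by simp
  have "fps_expansion h 0 $ 0 = 0"
    using has_fps_expansion_imp_0_eq_fps_nth_0[OF H] by (simp add: h_def)
  then show "n \<le> 0 \<Longrightarrow> laurent_at_infinity (\<lambda>t. d / (t - c)) $$ n = 0"
    unfolding eq by (cases "n = 0") auto
  have "(h has_field_derivative d) (at 0)"
    unfolding h_def by (auto intro!: derivative_eq_intros)
  then have "fps_expansion h 0 $ 1 = d"
    using fps_nth_fps_expansion[OF H, of 1] by (simp add: DERIV_imp_deriv)
  then show "laurent_at_infinity (\<lambda>t. d / (t - c)) $$ 1 = d"
    unfolding eq by simp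
qed

lemma tendsto_at_infinity_if_laurent_at_infinity:
  fixes R :: "complex \<Rightarrow> complex"
  assumes "(\<lambda>w. R (1 / w)) has_laurent_expansion E" and "\<And>n. n \<le> 0 \<Longrightarrow> E $$ n = 0"
  shows "(R \<longlongrightarrow> 0) at_infinity"
proof -
  have "0 \<le> fls_subdegree E"
    using assms(2) by (intro fls_subdegree_ge0I) simp
  from has_laurent_expansion_imp_tendsto_0[OF assms(1) this]
  have "((\<lambda>w. R (1 / w)) \<longlongrightarrow> 0) (filtermap inverse at_infinity)"
    using assms(2)[of 0] by (simp add: at_to_infinity)
  then show ?thesis
    by (simp add: filterlim_filtermap divide_inverse)
qed

lemma removable_singularities_vanishing_at_infinity:
  fixes R :: "complex \<Rightarrow> complex"
  assumes Z: "finite Z" "\<And>t. t \<notin> Z \<Longrightarrow> R analytic_on {t}"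
    and removable: "\<And>z. \<exists>E. (\<lambda>w. R (z + w)) has_laurent_expansion E \<and> 0 \<le> fls_subdegree E"
    and infinity: "(R \<longlongrightarrow> 0) at_infinity"
    and t: "t \<notin> Z"
  shows "R t = 0"
proof -
  have "remove_sings R analytic_on {z}" for z
  proof -
    obtain E where E: "(\<lambda>w. R (z + w)) has_laurent_expansion E" "0 \<le> fls_subdegree E"
      using removable by blast
    show ?thesis
      using has_laurent_expansion_isolated[OF E(1)] has_laurent_expansion_imp_tendsto[OF E]
      by (rule remove_sings_analytic_at)
  qed
  then have "remove_sings R holomorphic_on UNIV"
    using analytic_imp_holomorphic analytic_on_analytic_at by blast
  moreover have "(remove_sings R \<longlongrightarrow> 0) at_infinity"
  proof (rule Lim_transform_eventually[OF infinity])
    obtain b where "\<forall>z\<in>Z. norm z \<le> b"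
      using finite_imp_bounded[OF Z(1)] bounded_iff by blast
    then have "\<forall>\<^sub>F s in at_infinity. s \<notin> Z"
      unfolding eventually_at_infinity by (intro exI[of _ "b + 1"]) force
    then show "\<forall>\<^sub>F s in at_infinity. R s = remove_sings R s"
      by eventually_elim (simp add: Z(2))
  qed
  ultimately have "remove_sings R t = 0"
    by (rule Liouville_weak)
  then show ?thesis
    using t Z(2) by simp
qed

lemma rat_fun_principal_parts_removable:
  fixes g :: "complex \<Rightarrow> complex"
  assumes g: "rat_fun g" and simple: "\<And>n. n < -1 \<Longrightarrow> laurent_expansion g z $$ n = 0"
  defines "P \<equiv> {p. is_pole g p}"
  shows "\<exists>E. (\<lambda>w. g (z + w) - a * (z + w) - b - (\<Sum>p\<in>P. residue g p / (z + w - p)))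
               has_laurent_expansion E \<and> 0 \<le> fls_subdegree E"
proof (intro exI conjI)
  let ?L = "laurent_expansion g z"
  let ?E = "?L - fls_const a * (fls_const z + fls_X) - fls_const b -
            (\<Sum>p\<in>P. laurent_expansion (\<lambda>t. residue g p / (t - p)) z)"
  have L: "(\<lambda>w. g (z + w)) has_laurent_expansion ?L"
    using g by (rule rat_fun_has_laurent_expansion)
  show "(\<lambda>w. g (z + w) - a * (z + w) - b - (\<Sum>p\<in>P. residue g p / (z + w - p))) has_laurent_expansion ?E"
    by (intro has_laurent_expansion_diff has_laurent_expansion_sum L
        laurent_expansion_simple_fraction(1) laurent_expansion_intros)
  have residue: "?L $$ (-1) = (if z \<in> P then residue g z else 0)"
    using is_pole_fls_subdegree_iff[OF L] fls_subdegree_neg_iff[of ?L] simple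
      has_laurent_expansion_residue[OF L]
    unfolding P_def by auto
  have "?E $$ n = 0" if "n < 0" for n
    using that rat_fun_finite_poles[OF g] simple[of n] residue unfolding P_def
    by (cases "n = -1") (simp_all add: fls_nth_sum laurent_expansion_simple_fraction(2) sum.delta')
  then show "0 \<le> fls_subdegree ?E"
    by (intro fls_subdegree_ge0I)
qed

lemma rat_fun_principal_parts_tendsto_at_infinity:
  fixes g :: "complex \<Rightarrow> complex"
  assumes g: "rat_fun g" and simple: "\<And>n. n < -1 \<Longrightarrow> laurent_at_infinity g $$ n = 0"
  defines "a \<equiv> laurent_at_infinity g $$ (-1)" and "b \<equiv> laurent_at_infinity g $$ 0"
  shows "((\<lambda>t. g t - a * t - b - (\<Sum>p\<in>P. r p / (t - p))) \<longlongrightarrow> 0) at_infinity"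
proof (rule tendsto_at_infinity_if_laurent_at_infinity)
  let ?E = "laurent_at_infinity g - fls_const a * fls_X_inv - fls_const b -
            (\<Sum>p\<in>P. laurent_at_infinity (\<lambda>t. r p / (t - p)))"
  show "(\<lambda>w. g (1 / w) - a * (1 / w) - b - (\<Sum>p\<in>P. r p / (1 / w - p))) has_laurent_expansion ?E"
    by (intro has_laurent_expansion_diff has_laurent_expansion_sum has_laurent_expansion_cmult_left
        rat_fun_has_laurent_expansion_at_infinity[OF g] laurent_at_infinity_simple_fraction(1)
        has_laurent_expansion_one_over laurent_expansion_intros)
  show "?E $$ n = 0" if "n \<le> 0" for n
  proof -
    have "n < -1 \<or> n = -1 \<or> n = 0"
      using that by linarith
    then show ?thesis
      using simple[of n] by (auto simp: fls_nth_sum laurent_at_infinity_simple_fraction(2) a_def b_def)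
  qed
qed

lemma rat_fun_partial_fractions:
  fixes g :: "complex \<Rightarrow> complex"
  assumes g: "rat_fun g"
    and simple: "\<And>z n. n < -1 \<Longrightarrow> laurent_expansion g z $$ n = 0"
    and simple_infinity: "\<And>n. n < -1 \<Longrightarrow> laurent_at_infinity g $$ n = 0"
  defines "P \<equiv> {p. is_pole g p}"
  shows "\<forall>\<^sub>F t in cofinite. g t =
           laurent_at_infinity g $$ (-1) * t + laurent_at_infinity g $$ 0 + (\<Sum>p\<in>P. residue g p / (t - p))"
proof -
  define a where "a = laurent_at_infinity g $$ (-1)"
  define b where "b = laurent_at_infinity g $$ 0"
  define R where "R t = g t - a * t - b - (\<Sum>p\<in>P. residue g p / (t - p))" for t
  have finP: "finite P"
    unfolding P_def using g by (rule rat_fun_finite_poles)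
  obtain Z0 where Z0: "finite Z0" "\<And>t. t \<notin> Z0 \<Longrightarrow> g analytic_on {t}"
    using rat_fun_analytic_off_finite[OF g] by blast
  have "R analytic_on {t}" if "t \<notin> Z0 \<union> P" for t
    using that Z0(2)[of t] unfolding R_def by (intro analytic_intros) auto
  moreover have "\<exists>E. (\<lambda>w. R (z + w)) has_laurent_expansion E \<and> 0 \<le> fls_subdegree E" for z
    unfolding R_def P_def by (rule rat_fun_principal_parts_removable[OF g simple])
  moreover have "(R \<longlongrightarrow> 0) at_infinity"
    unfolding R_def a_def b_def by (rule rat_fun_principal_parts_tendsto_at_infinity[OF g simple_infinity])
  ultimately have "R t = 0" if "t \<notin> Z0 \<union> P" for t
    using Z0(1) finP that by (intro removable_singularities_vanishing_at_infinity[of "Z0 \<union> P" R]) auto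
  then have "{t. \<not> g t = a * t + b + (\<Sum>p\<in>P. residue g p / (t - p))} \<subseteq> Z0 \<union> P"
    unfolding R_def by (auto simp: algebra_simps)
  then show ?thesis
    unfolding eventually_cofinite a_def b_def using Z0(1) finP finite_subset by blast
qed

lemma res_inf_partial_fractions:
  fixes g :: "complex \<Rightarrow> complex"
  assumes "finite P" and "\<forall>\<^sub>F t in cofinite. g t = a * t + b + (\<Sum>p\<in>P. r p / (t - p))"
  shows "res_inf g = - (\<Sum>p\<in>P. r p)"
proof -
  let ?G = "fls_const a * fls_X_inv + fls_const b + (\<Sum>p\<in>P. laurent_at_infinity (\<lambda>t. r p / (t - p)))"
  have "(\<lambda>w. a * (1 / w) + b + (\<Sum>p\<in>P. r p / (1 / w - p))) has_laurent_expansion ?G"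
    by (intro has_laurent_expansion_add has_laurent_expansion_sum has_laurent_expansion_cmult_left
        laurent_at_infinity_simple_fraction(1) has_laurent_expansion_one_over laurent_expansion_intros)
  moreover have "\<forall>\<^sub>F w in at 0. g (1 / w) = a * (1 / w) + b + (\<Sum>p\<in>P. r p / (1 / w - p))"
    using assms(2) by (intro eventually_cofinite_imp_eventually_at eventually_cofinite_inverse)
  ultimately have "(\<lambda>w. g (1 / w)) has_laurent_expansion ?G"
    by (subst has_laurent_expansion_cong) auto
  then show ?thesis
    by (simp add: res_inf_eq_laurent_at_infinity_nth fls_nth_sum laurent_at_infinity_simple_fraction(3))
qed

section \<open>Pairing the poles\<close>

lemma sum_symmetric_split:
  fixes P H :: "'a::ab_group_add set"
  assumes fin: "finite P" and split: "P = (P \<inter> {0}) \<union> H \<union> uminus ` H"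
    and H: "0 \<notin> H" "\<And>p. p \<in> H \<Longrightarrow> - p \<notin> H"
  shows "(\<Sum>p\<in>P. h p) = (if 0 \<in> P then h 0 else 0) + (\<Sum>p\<in>H. h p + h (- p))"
proof -
  have finH: "finite H"
    using fin split by (metis finite_Un)
  have disjoint: "(P \<inter> {0}) \<inter> H = {}" "(P \<inter> {0} \<union> H) \<inter> uminus ` H = {}"
    using H by auto
  have "(\<Sum>p\<in>P. h p) = (\<Sum>p\<in>P \<inter> {0}. h p) + ((\<Sum>p\<in>H. h p) + (\<Sum>p\<in>uminus ` H. h p))"
    using fin finH disjoint by (subst split) (simp add: sum.union_disjoint add.assoc)
  also have "(\<Sum>p\<in>P \<inter> {0}. h p) = (if 0 \<in> P then h 0 else 0)"
    by simp
  also have "(\<Sum>p\<in>uminus ` H. h p) = (\<Sum>p\<in>H. h (- p))"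
    by (simp add: sum.reindex inj_on_def)
  finally show ?thesis
    by (simp add: sum.distrib)
qed

lemma symmetric_set_split_half_plane:
  fixes P :: "complex set"
  assumes sym: "\<And>p. p \<in> P \<Longrightarrow> - p \<in> P"
  defines "H \<equiv> {p \<in> P. 0 < Re p \<or> (Re p = 0 \<and> 0 < Im p)}"
  shows "P = (P \<inter> {0}) \<union> H \<union> uminus ` H"
proof (intro equalityI subsetI)
  fix p
  assume p: "p \<in> P"
  show "p \<in> (P \<inter> {0}) \<union> H \<union> uminus ` H"
  proof (cases "p = 0")
    case False
    then have "Re p \<noteq> 0 \<or> Im p \<noteq> 0"
      using complex_eq_iff by auto
    then consider "0 < Re p" | "0 < Re (- p)" | "Re p = 0" "0 < Im p" | "Re (- p) = 0" "0 < Im (- p)"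
      by fastforce
    then have "p \<in> H \<or> - p \<in> H"
      using p sym[OF p] unfolding H_def by cases auto
    moreover have "p \<in> uminus ` H" if "- p \<in> H"
      using image_eqI[of p uminus "- p" H] that by simp
    ultimately show ?thesis
      by blast
  qed (use p in simp)
qed (use sym in \<open>auto simp: H_def\<close>)

lemma finite_symmetric_set_pairs:
  fixes P :: "complex set"
  assumes fin: "finite P" and sym: "\<And>p. p \<in> P \<Longrightarrow> - p \<in> P"
  obtains n :: nat and c :: "nat \<Rightarrow> complex" where "\<And>j. j \<in> {1..n} \<Longrightarrow> c j \<in> P \<and> c j \<noteq> 0"
    and "\<And>j k. j \<in> {1..n} \<Longrightarrow> k \<in> {1..n} \<Longrightarrow> j \<noteq> k \<Longrightarrow> c j \<noteq> c k \<and> c j \<noteq> - c k"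
    and "\<And>h :: complex \<Rightarrow> complex.
           (\<Sum>p\<in>P. h p) = (if 0 \<in> P then h 0 else 0) + (\<Sum>j=1..n. h (c j) + h (- c j))"
proof -
  define H where "H = {p \<in> P. 0 < Re p \<or> (Re p = 0 \<and> 0 < Im p)}"
  have H: "H \<subseteq> P" "0 \<notin> H" "\<And>p. p \<in> H \<Longrightarrow> - p \<notin> H"
    unfolding H_def by auto
  have P_split: "P = (P \<inter> {0}) \<union> H \<union> uminus ` H"
    unfolding H_def using sym by (rule symmetric_set_split_half_plane)
  have finH: "finite H"
    using fin H(1) finite_subset by blast
  obtain c where c: "bij_betw c {1..card H} H"
    using ex_bij_betw_nat_finite_1[OF finH] by blast
  have cH: "c j \<in> H" if "j \<in> {1..card H}" for j
    using bij_betwE[OF c] that by blast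
  show ?thesis
  proof (rule that[of "card H" c])
    show "c j \<in> P \<and> c j \<noteq> 0" if "j \<in> {1..card H}" for j
      using cH[OF that] H(1,2) by auto
    show "c j \<noteq> c k \<and> c j \<noteq> - c k" if j: "j \<in> {1..card H}" and k: "k \<in> {1..card H}" and "j \<noteq> k"
      for j k
    proof
      show "c j \<noteq> c k"
        using inj_onD[OF bij_betw_imp_inj_on[OF c]] j k \<open>j \<noteq> k\<close> by blast
      show "c j \<noteq> - c k"
        using H(3)[OF cH[OF k]] cH[OF j] by auto
    qed
    show "(\<Sum>p\<in>P. h p) = (if 0 \<in> P then h 0 else 0) + (\<Sum>j=1..card H. h (c j) + h (- c j))" for h
    proof -
      have "(\<Sum>p\<in>P. h p) = (if 0 \<in> P then h 0 else 0) + (\<Sum>p\<in>H. h p + h (- p))"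
        by (rule sum_symmetric_split[OF fin P_split H(2)]) (rule H(3))
      then show ?thesis
        using sum.reindex_bij_betw[OF c, of "\<lambda>p. h p + h (- p)"] by simp
    qed
  qed
qed

lemma A4_pole_uminus:
  assumes "A4_rational_solution \<alpha> f" and "i < 5" and "is_pole (f i) p"
  shows "is_pole (f i) (- p)"
  using assms A4_is_pole_iff_residue[OF assms(1,2)] A4_residue_uminus[OF assms(1,2)] by metis

lemma A4_partial_fractions:
  assumes sol: "A4_rational_solution \<alpha> f" and i: "i < 5"
  shows "\<exists>(n::nat) (c::nat \<Rightarrow> complex).
           (\<forall>j\<in>{1..n}. is_pole (f i) (c j) \<and> c j \<noteq> 0) \<and>
           (\<forall>j\<in>{1..n}. \<forall>k\<in>{1..n}. j \<noteq> k \<longrightarrow> c j \<noteq> c k \<and> c j \<noteq> - c k) \<and>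
           (\<forall>\<^sub>F t in cofinite. f i t = laurent_at_infinity (f i) $$ (-1) * t +
              (if is_pole (f i) 0 then residue (f i) 0 / t else 0) +
              (\<Sum>j=1..n. residue (f i) (c j) / (t - c j) + residue (f i) (c j) / (t + c j)))"
proof -
  let ?P = "{p. is_pole (f i) p}"
  have rat: "rat_fun (f i)"
    using sol i by (rule A4_rational_solution_rat_fun)
  have rep: "\<forall>\<^sub>F t in cofinite. f i t =
      laurent_at_infinity (f i) $$ (-1) * t + (\<Sum>p\<in>?P. residue (f i) p / (t - p))"
    using rat_fun_partial_fractions[OF rat] A4_simple_poles[OF sol i]
      A4_simple_pole_at_infinity[OF sol i] A4_laurent_at_infinity_nth_0[OF sol i]
    by simp
  show ?thesis
  proof (rule finite_symmetric_set_pairs[OF rat_fun_finite_poles[OF rat]])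
    fix n :: nat and c :: "nat \<Rightarrow> complex"
    assume c: "\<And>j. j \<in> {1..n} \<Longrightarrow> c j \<in> ?P \<and> c j \<noteq> 0"
      and distinct: "\<And>j k. j \<in> {1..n} \<Longrightarrow> k \<in> {1..n} \<Longrightarrow> j \<noteq> k \<Longrightarrow> c j \<noteq> c k \<and> c j \<noteq> - c k"
      and pairs: "\<And>h :: complex \<Rightarrow> complex. (\<Sum>p\<in>?P. h p) =
                    (if 0 \<in> ?P then h 0 else 0) + (\<Sum>j=1..n. h (c j) + h (- c j))"
    have "(\<Sum>p\<in>?P. residue (f i) p / (t - p)) = (if is_pole (f i) 0 then residue (f i) 0 / t else 0) +
        (\<Sum>j=1..n. residue (f i) (c j) / (t - c j) + residue (f i) (c j) / (t + c j))" for t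
      using pairs[of "\<lambda>p. residue (f i) p / (t - p)"] by (simp add: A4_residue_uminus[OF sol i])
    with rep c distinct show ?thesis
      by (intro exI[of _ n] exI[of _ c] conjI) (simp_all add: add.assoc)
  qed (use A4_pole_uminus[OF sol i] in simp)
qed

lemma A4_res_inf:
  assumes sol: "A4_rational_solution \<alpha> f" and i: "i < 5"
  shows "res_inf (f i) = - (\<Sum>p | is_pole (f i) p. residue (f i) p)"
proof -
  have rat: "rat_fun (f i)"
    using sol i by (rule A4_rational_solution_rat_fun)
  show ?thesis
    using rat_fun_finite_poles[OF rat]
      rat_fun_partial_fractions[OF rat A4_simple_poles[OF sol i] A4_simple_pole_at_infinity[OF sol i]]
    by (rule res_inf_partial_fractions)
qed

lemma A4_leading_coefficient_at_infinity:
  assumes "A4_rational_solution \<alpha> f" and "i < 5"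
  shows "laurent_at_infinity (f i) $$ (-1) \<in> {0, 1, -1, 1/3, 1/5}"
  using fls_A4_at_infinity_leading_values[OF A4_rational_solution_fls_A4_at_infinity] assms .

text \<open>The residues are odd integers and those at \<open>p\<close> and \<open>-p\<close> agree, so modulo 2 only the residue
  at \<open>0\<close> contributes to their sum.\<close>
lemma A4_res_inf_odd_iff_pole:
  assumes sol: "A4_rational_solution \<alpha> f" and i: "i < 5" and k: "res_inf (f i) = of_int k"
  shows "odd k \<longleftrightarrow> is_pole (f i) 0"
proof -
  let ?P = "{p. is_pole (f i) p}"
  define M where "M p = \<lfloor>Re (residue (f i) p)\<rfloor>" for p
  have M: "residue (f i) p = of_int (M p) \<and> odd (M p)" if "is_pole (f i) p" for p
    using A4_residue_values[OF sol i that] by (auto simp: M_def floor_minus)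
  have M_uminus: "M (- p) = M p" for p
    by (simp add: M_def A4_residue_uminus[OF sol i])
  have rat: "rat_fun (f i)"
    using sol i by (rule A4_rational_solution_rat_fun)
  show ?thesis
  proof (rule finite_symmetric_set_pairs[OF rat_fun_finite_poles[OF rat]])
    fix n :: nat and c :: "nat \<Rightarrow> complex"
    assume c: "\<And>j. j \<in> {1..n} \<Longrightarrow> c j \<in> ?P \<and> c j \<noteq> 0"
      and pairs: "\<And>h :: complex \<Rightarrow> complex. (\<Sum>p\<in>?P. h p) =
                    (if 0 \<in> ?P then h 0 else 0) + (\<Sum>j=1..n. h (c j) + h (- c j))"
    define m where "m = - ((if is_pole (f i) 0 then M 0 else 0) + 2 * (\<Sum>j=1..n. M (c j)))"
    have "res_inf (f i) = of_int m"
      using A4_res_inf[OF sol i] pairs[of "residue (f i)"] M c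
      by (simp add: m_def M_uminus A4_residue_uminus[OF sol i] sum_distrib_left)
    with k have "k = m"
      by simp
    moreover have "odd m \<longleftrightarrow> is_pole (f i) 0"
      using M[of 0] by (auto simp: m_def)
    ultimately show ?thesis
      by simp
  qed (use A4_pole_uminus[OF sol i] in simp)
qed

theorem corollary1p6:
  fixes \<alpha> :: "nat \<Rightarrow> complex" and f :: "nat \<Rightarrow> complex \<Rightarrow> complex" and i :: nat
  assumes sol: "A4_rational_solution \<alpha> f" and i: "i < 5"
  shows
    "(\<forall>c. c \<noteq> 0 \<and> is_pole (f i) c \<longrightarrow>
         is_pole (f i) (- c) \<and> residue (f i) c = residue (f i) (- c))
   \<and> ((\<exists>k::int. res_inf (f i) = of_int (2 * k)) \<longrightarrow>
         \<not> is_pole (f i) 0 \<and>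
         (\<exists>a n (\<epsilon>::nat \<Rightarrow> complex) (c::nat \<Rightarrow> complex).
            a \<in> {0, 1, -1, 1/3, 1/5} \<and>
            (\<forall>j\<in>{1..n}. \<epsilon> j \<in> {1, -1, 3, -3} \<and> c j \<noteq> 0) \<and>
            (\<forall>j\<in>{1..n}. \<forall>k\<in>{1..n}. j \<noteq> k \<longrightarrow> c j \<noteq> c k \<and> c j \<noteq> - c k) \<and>
            (\<forall>\<^sub>F t in cofinite. f i t =
               a * t + (\<Sum>j=1..n. \<epsilon> j / (t - c j) + \<epsilon> j / (t + c j)))))
   \<and> ((\<exists>k::int. res_inf (f i) = of_int (2 * k + 1)) \<longrightarrow>
         is_pole (f i) 0 \<and>
         (\<exists>a n (\<epsilon>::nat \<Rightarrow> complex) (c::nat \<Rightarrow> complex).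
            (\<forall>j\<in>{0..n}. \<epsilon> j \<in> {1, -1, 3, -3}) \<and>
            (\<forall>j\<in>{1..n}. c j \<noteq> 0) \<and>
            (\<forall>j\<in>{1..n}. \<forall>k\<in>{1..n}. j \<noteq> k \<longrightarrow> c j \<noteq> c k \<and> c j \<noteq> - c k) \<and>
            (\<forall>\<^sub>F t in cofinite. f i t =
               a * t + \<epsilon> 0 / t + (\<Sum>j=1..n. \<epsilon> j / (t - c j) + \<epsilon> j / (t + c j)))))"
proof -
  obtain n :: nat and c :: "nat \<Rightarrow> complex"
    where c: "\<forall>j\<in>{1..n}. is_pole (f i) (c j) \<and> c j \<noteq> 0"
    and distinct: "\<forall>j\<in>{1..n}. \<forall>k\<in>{1..n}. j \<noteq> k \<longrightarrow> c j \<noteq> c k \<and> c j \<noteq> - c k"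
    and rep: "\<forall>\<^sub>F t in cofinite. f i t = laurent_at_infinity (f i) $$ (-1) * t +
               (if is_pole (f i) 0 then residue (f i) 0 / t else 0) +
               (\<Sum>j=1..n. residue (f i) (c j) / (t - c j) + residue (f i) (c j) / (t + c j))"
    using A4_partial_fractions[OF sol i] by (elim exE conjE) (rule that)
  note leading = A4_leading_coefficient_at_infinity[OF sol i]
  note residues = A4_residue_values[OF sol i]
  show ?thesis (is "?symmetric \<and> (?even \<longrightarrow> ?no_pole \<and> ?even_form) \<and> (?odd \<longrightarrow> ?pole \<and> ?odd_form)")
  proof (intro conjI impI)
    show ?symmetric
      using A4_pole_uminus[OF sol i] A4_residue_uminus[OF sol i] by simp
  next
    assume ?even
    then obtain k :: int where "res_inf (f i) = of_int (2 * k)" ..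
    from A4_res_inf_odd_iff_pole[OF sol i this] show no_pole: ?no_pole
      by simp
    show ?even_form
      using leading c residues distinct rep no_pole
      by (intro exI[of _ "laurent_at_infinity (f i) $$ (-1)"] exI[of _ n]
          exI[of _ "\<lambda>j. residue (f i) (c j)"] exI[of _ c]) auto
  next
    assume ?odd
    then obtain k :: int where "res_inf (f i) = of_int (2 * k + 1)" ..
    from A4_res_inf_odd_iff_pole[OF sol i this] show pole: ?pole
      by simp
    show ?odd_form
      using c residues distinct rep pole
      by (intro exI[of _ "laurent_at_infinity (f i) $$ (-1)"] exI[of _ n]
          exI[of _ "\<lambda>j. if j = 0 then residue (f i) 0 else residue (f i) (c j)"] exI[of _ c]) auto
  qed
qed

end
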